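(* Let $d$ be a symmetric nonnegative function on a set $\mathcal X$ with $d(x,z)\le M(d(x,y)+d(y,z))$ for all $x,y,z\in\mathcal X$. Let $\mathcal S\subset\mathcal X$ be finite, $\mathcal C_{\mathrm{OPT}}\subset\mathcal X$ a set of $K$ centers minimizing $\sum_{x\in\mathcal S}\min_{c\in\mathcal C}d(x,c)^2$, and let $A\subseteq\mathcal S$ be one cluster of the partition of $\mathcal S$ induced by $\mathcal C_{\mathrm{OPT}}$ (points sharing the same nearest optimal center). Let $\mathcal C$ be an arbitrary set of centers, $D(a)=\min_{c\in\mathcal C}d(a,c)$, and define $\Upsilon(A)=\sum_{a\in A}\min_{c\in\mathcal C}d(a,c)^2$ and $\Upsilon_{\mathrm{OPT}}(A)=\sum_{a\in A}\min_{c\in\mathcal C_{\mathrm{OPT}}}d(a,c)^2$. If a random center $a_0\in A$ is added to $\mathcal C$, chosen with probability $D(a_0)^2/\sum_{a\in A}D(a)^2$, then, with $\Upsilon(A)$ computed for the enlarged center set, $\mathbb E[\Upsilon(A)]\le16M^4\,\Upsilon_{\mathrm{OPT}}(A)$. *)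

theory Defs
  imports Main "HOL.Real"
begin

definition Dmin :: "('a \<Rightarrow> 'a \<Rightarrow> real) \<Rightarrow> 'a set \<Rightarrow> 'a \<Rightarrow> real" where
  "Dmin d C x = Min ((\<lambda>c. d x c) ` C)"

definition Upsilon :: "('a \<Rightarrow> 'a \<Rightarrow> real) \<Rightarrow> 'a set \<Rightarrow> 'a set \<Rightarrow> real" where
  "Upsilon d C A = (\<Sum>a\<in>A. (Dmin d C a)^2)"

definition expected_Upsilon :: "('a \<Rightarrow> 'a \<Rightarrow> real) \<Rightarrow> 'a set \<Rightarrow> 'a set \<Rightarrow> real" where
  "expected_Upsilon d C A =
     (\<Sum>a0\<in>A. ((Dmin d C a0)^2 / (\<Sum>a\<in>A. (Dmin d C a)^2)) * Upsilon d (insert a0 C) A)"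

end

theory Submission
  imports Defs
begin

text \<open>Write \<open>D\<close> for the distance to the current centers and \<open>E b = \<Sum>a\<in>A. d a b\<^sup>2\<close>.
  The relaxed triangle inequality gives \<open>D b\<^sup>2 \<le> 2M\<^sup>2 (D a\<^sup>2 + d a b\<^sup>2)\<close>; averaging over
  \<open>a \<in> A\<close> bounds the sampling probability of \<open>b\<close> by \<open>2M\<^sup>2 (1/|A| + E b / (|A| \<Upsilon>(A)))\<close>.
  After adding \<open>b\<close> the potential is at most both \<open>\<Upsilon>(A)\<close> and \<open>E b\<close>, so the expected
  potential is at most \<open>4M\<^sup>2/|A| \<Sum>b\<in>A. E b\<close>. Applying the squared relaxed triangle
  inequality once more through the center \<open>c\<^sub>0\<close> bounds this double sum by
  \<open>4M\<^sup>2 |A| \<Sum>a\<in>A. d a c\<^sub>0\<^sup>2\<close>, and the latter sum is \<open>\<Upsilon>\<^sub>O\<^sub>P\<^sub>T(A)\<close> because \<open>c\<^sub>0\<close> is the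
  nearest optimal center of every point of \<open>A\<close>.\<close>

lemma Dmin_le:
  assumes "finite C" "c \<in> C"
  shows "Dmin d C a \<le> d a c"
  using assms by (simp add: Dmin_def)

lemma Dmin_attained:
  assumes "finite C" "C \<noteq> {}"
  obtains c where "c \<in> C" "Dmin d C a = d a c"
proof -
  have "Min ((\<lambda>c. d a c) ` C) \<in> (\<lambda>c. d a c) ` C" using assms by (intro Min_in) auto
  then show ?thesis using that unfolding Dmin_def by auto
qed

lemma Dmin_insert:
  assumes "finite C" "C \<noteq> {}"
  shows "Dmin d (insert x C) a = min (d a x) (Dmin d C a)"
  using assms by (simp add: Dmin_def Min_insert)

lemma power2_le_of_le_mult_add:
  fixes M x y z :: real
  assumes "0 \<le> x" "x \<le> M * (y + z)"
  shows "x\<^sup>2 \<le> 2 * M\<^sup>2 * (y\<^sup>2 + z\<^sup>2)"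
proof -
  have "x\<^sup>2 \<le> (M * (y + z))\<^sup>2" using assms by (intro power_mono) auto
  also have "\<dots> = M\<^sup>2 * (y + z)\<^sup>2" by (simp add: power_mult_distrib)
  also have "\<dots> \<le> M\<^sup>2 * (2 * (y\<^sup>2 + z\<^sup>2))"
  proof (rule mult_left_mono)
    have "0 \<le> (y - z)\<^sup>2" by simp
    then show "(y + z)\<^sup>2 \<le> 2 * (y\<^sup>2 + z\<^sup>2)" by (simp add: power2_eq_square algebra_simps)
  qed simp
  finally show ?thesis by (simp add: algebra_simps)
qed

locale relaxed_semimetric =
  fixes d :: "'a \<Rightarrow> 'a \<Rightarrow> real" and M :: real
  assumes sym: "d x y = d y x"
    and nonneg: "0 \<le> d x y"
    and relaxed_tri: "d x z \<le> M * (d x y + d y z)"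
begin

lemma power2_relaxed_tri: "(d x z)\<^sup>2 \<le> 2 * M\<^sup>2 * ((d x y)\<^sup>2 + (d y z)\<^sup>2)"
  by (rule power2_le_of_le_mult_add[OF nonneg relaxed_tri])

lemma Dmin_nonneg:
  assumes "finite C" "C \<noteq> {}"
  shows "0 \<le> Dmin d C a"
  using Dmin_attained[OF assms] nonneg by metis

lemma Upsilon_nonneg: "0 \<le> Upsilon d C A"
  unfolding Upsilon_def by (simp add: sum_nonneg)

lemma Upsilon_insert_le:
  assumes "finite C" "C \<noteq> {}"
  shows "Upsilon d (insert b C) A \<le> Upsilon d C A"
    and "Upsilon d (insert b C) A \<le> (\<Sum>a\<in>A. (d a b)\<^sup>2)"
  unfolding Upsilon_def Dmin_insert[OF assms]
  by (intro sum_mono power_mono; simp add: nonneg Dmin_nonneg[OF assms])+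

lemma card_mult_Dmin_power2_le:
  assumes "finite C" "C \<noteq> {}"
  shows "real (card A) * (Dmin d C b)\<^sup>2 \<le> 2 * M\<^sup>2 * (Upsilon d C A + (\<Sum>a\<in>A. (d a b)\<^sup>2))"
proof -
  have "(Dmin d C b)\<^sup>2 \<le> 2 * M\<^sup>2 * ((Dmin d C a)\<^sup>2 + (d a b)\<^sup>2)" for a
  proof -
    obtain c where c: "c \<in> C" "Dmin d C a = d a c" using Dmin_attained[OF assms] .
    have "Dmin d C b \<le> d b c" by (rule Dmin_le[OF assms(1) c(1)])
    also have "\<dots> \<le> M * (d b a + d a c)" by (rule relaxed_tri)
    finally have "Dmin d C b \<le> M * (Dmin d C a + d a b)" using c sym by (simp add: add.commute)
    then show ?thesis by (rule power2_le_of_le_mult_add[OF Dmin_nonneg[OF assms]])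
  qed
  then have "(\<Sum>a\<in>A. (Dmin d C b)\<^sup>2) \<le> (\<Sum>a\<in>A. 2 * M\<^sup>2 * ((Dmin d C a)\<^sup>2 + (d a b)\<^sup>2))"
    by (intro sum_mono)
  then show ?thesis by (simp add: Upsilon_def sum_distrib_left[symmetric] sum.distrib)
qed

lemma card_mult_sampling_term_le:
  assumes "finite C" "C \<noteq> {}" and pos: "0 < Upsilon d C A"
  shows "real (card A) * ((Dmin d C b)\<^sup>2 / Upsilon d C A * Upsilon d (insert b C) A)
    \<le> 4 * M\<^sup>2 * (\<Sum>a\<in>A. (d a b)\<^sup>2)"
proof -
  define T U E where "T = Upsilon d C A" and "U = Upsilon d (insert b C) A"
    and "E = (\<Sum>a\<in>A. (d a b)\<^sup>2)"
  have U_le: "U \<le> T" "U \<le> E" using Upsilon_insert_le[OF assms(1,2)] by (auto simp: T_def U_def E_def)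
  have "0 \<le> U" "0 \<le> E" by (auto simp: T_def U_def E_def Upsilon_nonneg nonneg sum_nonneg)
  have "real (card A) * ((Dmin d C b)\<^sup>2 / T * U) = (real (card A) * (Dmin d C b)\<^sup>2) * U / T"
    by simp
  also have "\<dots> \<le> (2 * M\<^sup>2 * (T + E)) * U / T"
    using card_mult_Dmin_power2_le[OF assms(1,2)] \<open>0 \<le> U\<close> pos
    by (intro divide_right_mono mult_right_mono) (auto simp: T_def U_def E_def)
  also have "\<dots> = 2 * M\<^sup>2 * (U + E * (U / T))" using pos by (simp add: T_def U_def E_def field_simps)
  also have "\<dots> \<le> 2 * M\<^sup>2 * (E + E * 1)"
    using U_le pos \<open>0 \<le> E\<close> by (intro mult_left_mono add_mono) (auto simp: T_def U_def E_def)
  finally show ?thesis by (simp add: T_def U_def E_def)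
qed

lemma card_mult_expected_Upsilon_le:
  assumes "finite C" "C \<noteq> {}"
  shows "real (card A) * expected_Upsilon d C A \<le> 4 * M\<^sup>2 * (\<Sum>b\<in>A. \<Sum>a\<in>A. (d a b)\<^sup>2)"
proof (cases "Upsilon d C A = 0")
  case True
  then show ?thesis
    by (simp add: expected_Upsilon_def Upsilon_def[symmetric] sum_nonneg nonneg)
next
  case False
  then have "0 < Upsilon d C A" using Upsilon_nonneg by (simp add: order_less_le)
  then have "(\<Sum>b\<in>A. real (card A) * ((Dmin d C b)\<^sup>2 / Upsilon d C A * Upsilon d (insert b C) A))
      \<le> (\<Sum>b\<in>A. 4 * M\<^sup>2 * (\<Sum>a\<in>A. (d a b)\<^sup>2))"
    by (intro sum_mono card_mult_sampling_term_le[OF assms])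
  then show ?thesis
    by (simp add: expected_Upsilon_def Upsilon_def[symmetric] sum_distrib_left)
qed

lemma pairwise_power2_sum_le:
  "(\<Sum>b\<in>A. \<Sum>a\<in>A. (d a b)\<^sup>2) \<le> 4 * M\<^sup>2 * real (card A) * (\<Sum>a\<in>A. (d a c)\<^sup>2)"
proof -
  have "(\<Sum>b\<in>A. \<Sum>a\<in>A. (d a b)\<^sup>2) \<le> (\<Sum>b\<in>A. \<Sum>a\<in>A. 2 * M\<^sup>2 * ((d a c)\<^sup>2 + (d b c)\<^sup>2))"
    using power2_relaxed_tri sym by (intro sum_mono) metis
  also have "\<dots> = 4 * M\<^sup>2 * real (card A) * (\<Sum>a\<in>A. (d a c)\<^sup>2)"
    by (simp add: sum.distrib sum_distrib_left[symmetric] algebra_simps)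
  finally show ?thesis .
qed

theorem expected_Upsilon_le:
  assumes "finite C" "C \<noteq> {}"
  shows "expected_Upsilon d C A \<le> 16 * M ^ 4 * (\<Sum>a\<in>A. (d a c)\<^sup>2)"
proof (cases "card A = 0")
  case True
  then have "expected_Upsilon d C A = 0" by (cases "finite A") (auto simp: expected_Upsilon_def)
  then show ?thesis by (simp add: sum_nonneg)
next
  case False
  then have n: "0 < real (card A)" by simp
  have "real (card A) * expected_Upsilon d C A
      \<le> real (card A) * (16 * M ^ 4 * (\<Sum>a\<in>A. (d a c)\<^sup>2))"
    using card_mult_expected_Upsilon_le[OF assms, of A]
      mult_left_mono[OF pairwise_power2_sum_le[of A c], of "4 * M\<^sup>2"]
    by (simp add: power4_eq_xxxx power2_eq_square algebra_simps)
  then show ?thesis using n by simp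
qed

end

theorem lemma3:
  fixes d :: "'a \<Rightarrow> 'a \<Rightarrow> real" and M :: real and K :: nat
    and S Copt C A :: "'a set" and assign :: "'a \<Rightarrow> 'a" and c0 :: 'a
  assumes sym: "\<And>x y. d x y = d y x"
    and nonneg: "\<And>x y. d x y \<ge> 0"
    and relaxed_tri: "\<And>x y z. d x z \<le> M * (d x y + d y z)"
    and finS: "finite S"
    and Copt_fin: "finite Copt" and Copt_card: "card Copt = K"
    and Copt_opt: "\<And>C'. finite C' \<Longrightarrow> card C' = K \<Longrightarrow> Upsilon d Copt S \<le> Upsilon d C' S"
    and assign_in: "\<And>x. x \<in> S \<Longrightarrow> assign x \<in> Copt"
    and assign_nearest: "\<And>x. x \<in> S \<Longrightarrow> d x (assign x) = Dmin d Copt x"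
    and c0: "c0 \<in> Copt"
    and A_def: "A = {x \<in> S. assign x = c0}"
    and C_fin: "finite C" and C_ne: "C \<noteq> {}"
  shows "expected_Upsilon d C A \<le> 16 * M^4 * Upsilon d Copt A"
proof -
  interpret relaxed_semimetric d M
    using sym nonneg relaxed_tri by unfold_locales
  have "Upsilon d Copt A = (\<Sum>a\<in>A. (d a c0)\<^sup>2)"
    unfolding Upsilon_def by (rule sum.cong) (auto simp: A_def assign_nearest[symmetric])
  then show ?thesis using expected_Upsilon_le[OF C_fin C_ne] by simp
qed

end
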